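(* Let $(X_n)$ be i.i.d. real random variables distributed as $X$, with $\mathbb{P}(X<0)>0$ and $X$ non-lattice, and let $(Y_n)$ be i.i.d., independent of $(X_n)$, with $\mathbb{P}(Y_1=1)=p=1-\mathbb{P}(Y_1=-1)$, $p\in(0,1)$. Let $W$ have the stationary distribution of $W_{n+1}=(Y_nW_n+X_n)^+$. Suppose there exists $\kappa>0$ with $\mathbb{E}[e^{\kappa X}]=1/p$ and $m=\mathbb{E}[Xe^{\kappa X}]<\infty$. Let $R=e^W$, $M=Be^X$ with $B$ Bernoulli($p$) independent of $X$, and $(B,X)$ independent of $R$, and let \[C=\frac1m\int_0^\infty\big[\mathbb{P}(R>t)-\mathbb{P}(MR>t)\big]t^{\kappa-1}\,dt.\] Then, with $X$ and $W$ independent, \[C=\frac{1-p}{m\kappa}+\frac{1-p}{m}\int_0^\infty\mathbb{P}(X-W>s)e^{\kappa s}\,ds+\frac pm\int_{-\infty}^0e^{\kappa s}\,\mathbb{P}(X+W\le s)\,ds.\]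
   Context: $W$ denotes a random variable with $W\stackrel{D}{=}(YW+X)^+$, where $W,Y,X$ are independent and $Y\stackrel{D}{=}Y_1$. *)

theory Defs
  imports "HOL-Probability.Probability"
begin

definition (in prob_space) nonlattice_rv :: "('a \<Rightarrow> real) \<Rightarrow> bool" where
  "nonlattice_rv X \<longleftrightarrow>
     \<not> (\<exists>a h. h > 0 \<and> (AE \<omega> in M. \<exists>k::int. X \<omega> = a + of_int k * h))"

end

theory Submission
  imports Defs
begin

(* Substituting t = e^s turns m C into the integral of phi(s) e^(kappa s) over the real line, where
   phi(s) = P(W > s) - p P(X + W > s).  For s < 0, P(W > s) = 1 because W >= 0.  Hence phi = (1 - p) P(X - W > .) on [0, oo)
   and phi = (1 - p) + p P(X + W <= .) on (-oo, 0), and the integral splits into the three terms.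
   All integrals converge since P(X - W > s) <= P(X > s) and E e^(kappa X) < oo. *)

lemma less_exp_iff_ln_less:
  fixes t w :: real
  shows "0 < t \<Longrightarrow> t < exp w \<longleftrightarrow> ln t < w"
  using exp_less_cancel_iff[of "ln t" w] by simp

lemma SUP_indicator_incseq:
  assumes "incseq A"
  shows "(SUP i. indicator (A i) x :: ennreal) = indicator (\<Union>i. A i) x"
proof (cases "x \<in> (\<Union>i. A i)")
  case True
  then obtain j where "x \<in> A j" by blast
  then have "(SUP i. indicator (A i) x :: ennreal) = 1"
    by (intro antisym SUP_upper2[of j]) (auto intro: SUP_least simp: indicator_def)
  with True show ?thesis by simp
qed auto

lemma nn_integral_incseq_UN:
  assumes [measurable]: "f \<in> borel_measurable M" "\<And>i. A i \<in> sets M" and "incseq A"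
  shows "(\<integral>\<^sup>+x. f x * indicator (\<Union>i. A i) x \<partial>M) = (SUP i. \<integral>\<^sup>+x. f x * indicator (A i) x \<partial>M)"
proof -
  have "incseq (\<lambda>i x. f x * indicator (A i) x)"
    using \<open>incseq A\<close> by (auto simp: incseq_def le_fun_def intro!: mult_left_mono split: split_indicator)
  then have "(SUP i. \<integral>\<^sup>+x. f x * indicator (A i) x \<partial>M) = (\<integral>\<^sup>+x. (SUP i. f x * indicator (A i) x) \<partial>M)"
    by (intro nn_integral_monotone_convergence_SUP[symmetric]) auto
  then show ?thesis
    by (simp add: SUP_mult_left_ennreal[symmetric] SUP_indicator_incseq[OF \<open>incseq A\<close>])
qed

lemma ennreal_mult_indicator: "ennreal (r * indicator A x) = ennreal r * indicator A x"
  by (simp split: split_indicator)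

lemma exp_image_atLeastAtMost:
  fixes a b :: real
  shows "exp ` {a..b} = {exp a..exp b}"
proof (intro antisym subsetI)
  fix y assume y: "y \<in> {exp a..exp b}"
  then have "0 < y" by (auto intro: less_le_trans[OF exp_gt_zero])
  with y have "y = exp (ln y)" "ln y \<in> {a..b}"
    by (auto simp: ln_ge_iff) (metis exp_le_cancel_iff exp_ln)
  then show "y \<in> exp ` {a..b}" by blast
qed auto

(* The library substitution rule is for compact intervals; exhaust the line by [-n, n]. *)
lemma nn_integral_exp_substitution:
  fixes f :: "real \<Rightarrow> real"
  assumes [measurable]: "f \<in> borel_measurable borel"
  shows "(\<integral>\<^sup>+t. f t * indicator {0<..} t \<partial>lborel) = (\<integral>\<^sup>+s. f (exp s) * exp s \<partial>lborel)"
proof -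
  define I where "I n = {- real n..real n}" for n :: nat
  have I_sets: "I n \<in> sets lborel" for n
    by (simp add: I_def)
  have I_incseq: "incseq I" and I_UN: "(\<Union>n. I n) = UNIV"
  proof -
    show "incseq I" by (auto simp: I_def incseq_def)
    have "x \<in> I (nat \<lceil>\<bar>x\<bar>\<rceil>)" for x
      unfolding I_def by (simp add: abs_le_iff[symmetric]) linarith
    then show "(\<Union>n. I n) = UNIV" by blast
  qed
  have exp_I_incseq: "incseq (\<lambda>n. exp ` I n)"
    using I_incseq by (auto simp: incseq_def)
  have exp_I_UN: "(\<Union>n. exp ` I n) = {0<..}"
    by (auto simp: image_UN[symmetric] I_UN) (metis exp_ln rangeI)
  have exp_I: "exp ` I n = {exp (- real n)..exp (real n)}" for n
    by (simp add: I_def exp_image_atLeastAtMost)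
  have "(\<integral>\<^sup>+t. f t * indicator {0<..} t \<partial>lborel)
      = (SUP n. \<integral>\<^sup>+t. f t * indicator (exp ` I n) t \<partial>lborel)"
    unfolding exp_I_UN[symmetric] ennreal_mult_indicator
    by (rule nn_integral_incseq_UN[OF _ _ exp_I_incseq]) (auto simp: exp_I)
  also have "\<dots> = (SUP n. \<integral>\<^sup>+s. f (exp s) * exp s * indicator (I n) s \<partial>lborel)"
  proof (rule SUP_cong[OF refl])
    fix n :: nat
    show "(\<integral>\<^sup>+t. f t * indicator (exp ` I n) t \<partial>lborel)
        = (\<integral>\<^sup>+s. f (exp s) * exp s * indicator (I n) s \<partial>lborel)"
      unfolding exp_I unfolding I_def
      by (rule nn_integral_substitution)
        (auto simp: set_borel_measurable_def intro!: derivative_eq_intros continuous_intros)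
  qed
  also have "\<dots> = (\<integral>\<^sup>+s. f (exp s) * exp s \<partial>lborel)"
    unfolding ennreal_mult_indicator
    using nn_integral_incseq_UN[OF _ I_sets I_incseq, of "\<lambda>s. ennreal (f (exp s) * exp s)"]
    by (simp add: I_UN)
  finally show ?thesis .
qed

lemma LBINT_powr_exp_substitution:
  fixes g :: "real \<Rightarrow> real"
  assumes [measurable]: "g \<in> borel_measurable borel" and g_nonneg: "\<And>s. 0 \<le> g s"
  shows "(LBINT t:{0<..}. g (ln t) * t powr (k - 1)) = (LBINT s. g s * exp (k * s))"
proof -
  have exp_powr: "g s * exp s powr (k - 1) * exp s = g s * exp (k * s)" for s
    by (simp add: powr_def exp_add[symmetric] algebra_simps)
  have "(LBINT t:{0<..}. g (ln t) * t powr (k - 1))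
      = enn2real (\<integral>\<^sup>+t. g (ln t) * t powr (k - 1) * indicator {0<..} t \<partial>lborel)"
    unfolding set_lebesgue_integral_def
    by (subst integral_eq_nn_integral) (auto simp: g_nonneg mult_ac)
  also have "\<dots> = enn2real (\<integral>\<^sup>+s. g s * exp (k * s) \<partial>lborel)"
    by (subst nn_integral_exp_substitution) (auto simp: exp_powr)
  also have "\<dots> = (LBINT s. g s * exp (k * s))"
    by (subst integral_eq_nn_integral) (auto simp: g_nonneg)
  finally show ?thesis .
qed

lemma LBINT_exp_atMost:
  fixes k c :: real assumes k: "0 < k"
  shows "set_integrable lborel {..c} (\<lambda>s. exp (k * s))"
    and "(LBINT s:{..c}. exp (k * s)) = exp (k * c) / k"
proof -
  define F where "F s = exp (k * s) / k" for s
  have F_deriv: "(F has_real_derivative exp (k * s)) (at s)" for s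
    unfolding F_def[abs_def] using k by (auto intro!: derivative_eq_intros)
  have F_bot: "((F \<circ> real_of_ereal) \<longlongrightarrow> 0) (at_right (-\<infinity>))"
    unfolding ereal_tendsto_simps F_def[abs_def] using k
    by (intro tendsto_divide_zero filterlim_compose[OF exp_at_bot]
        filterlim_tendsto_pos_mult_at_bot[OF tendsto_const] filterlim_ident)
  have F_c: "((F \<circ> real_of_ereal) \<longlongrightarrow> F c) (at_left (ereal c))"
    unfolding ereal_tendsto_simps F_def[abs_def] using k by (intro tendsto_intros) auto
  note FTC_einterval = interval_integral_FTC_nonneg[OF _ F_deriv _ _ F_bot F_c]
  have FTC: "set_integrable lborel {..<c} (\<lambda>s. exp (k * s))"
      "(LBINT s:{..<c}. exp (k * s)) = exp (k * c) / k"
    using FTC_einterval by (simp_all add: F_def interval_lebesgue_integral_le_eq continuous_intros)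
  have AE_eq: "AE s in lborel. indicator {..c} s *\<^sub>R exp (k * s) = indicator {..<c} s *\<^sub>R exp (k * s)"
    using AE_lborel_singleton[of c] by eventually_elim (auto simp: indicator_def)
  show "set_integrable lborel {..c} (\<lambda>s. exp (k * s))"
    using FTC(1) unfolding set_integrable_def by (subst integrable_cong_AE[OF _ _ AE_eq]) auto
  show "(LBINT s:{..c}. exp (k * s)) = exp (k * c) / k"
    using FTC(2) unfolding set_lebesgue_integral_def by (subst integral_cong_AE[OF _ _ AE_eq]) auto
qed

lemma nn_integral_exp_Ioo_le:
  fixes k z :: real assumes k: "0 < k"
  shows "(\<integral>\<^sup>+s. ennreal (exp (k * s)) * indicator {0<..<z} s \<partial>lborel) \<le> exp (k * z) / k"
proof -
  have "(\<integral>\<^sup>+s. ennreal (exp (k * s)) * indicator {0<..<z} s \<partial>lborel)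
      \<le> (\<integral>\<^sup>+s. ennreal (exp (k * s)) * indicator {0..max 0 z} s \<partial>lborel)"
    by (intro nn_integral_mono) (auto split: split_indicator)
  also have "\<dots> = ennreal (exp (k * max 0 z) / k - exp (k * 0) / k)"
    by (rule nn_integral_FTC_Icc) (use k in \<open>auto intro!: derivative_eq_intros\<close>)
  also have "\<dots> \<le> exp (k * z) / k"
    using k by (intro ennreal_leI) (auto simp: max_def diff_divide_distrib[symmetric] divide_right_mono)
  finally show ?thesis .
qed

lemma (in prob_space) indep_var_restrict_compose:
  assumes "indep_vars (\<lambda>_. borel) Z I" and "a \<in> I" "K \<subseteq> I" "a \<notin> K"
    and f: "f \<in> borel_measurable (PiM K (\<lambda>_. borel))"
  shows "indep_var borel (Z a) borel (\<lambda>\<omega>. f (restrict (\<lambda>i. Z i \<omega>) K))"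
proof -
  have "indep_var (PiM {a} (\<lambda>_. borel)) (\<lambda>\<omega>. restrict (\<lambda>i. Z i \<omega>) {a})
      (PiM K (\<lambda>_. borel)) (\<lambda>\<omega>. restrict (\<lambda>i. Z i \<omega>) K)"
    by (rule indep_var_restrict[OF assms(1)]) (use assms(2-4) in auto)
  then have "indep_var borel ((\<lambda>g. g a) \<circ> (\<lambda>\<omega>. restrict (\<lambda>i. Z i \<omega>) {a}))
      borel (f \<circ> (\<lambda>\<omega>. restrict (\<lambda>i. Z i \<omega>) K))"
    by (rule indep_var_compose) (auto intro: f measurable_component_singleton)
  then show ?thesis by (simp add: comp_def)
qed

lemma (in prob_space) prob_indep_var_conj:
  assumes "indep_var borel U borel V" "A \<in> sets borel" "D \<in> sets borel"
  shows "prob {\<omega> \<in> space M. U \<omega> \<in> A \<and> V \<omega> \<in> D}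
    = prob {\<omega> \<in> space M. U \<omega> \<in> A} * prob {\<omega> \<in> space M. V \<omega> \<in> D}"
  using indep_varD[OF assms] by (simp add: vimage_def Int_def conj_commute)

lemma (in prob_space) AE_two_valued:
  fixes Z :: "'a \<Rightarrow> real"
  assumes [measurable]: "Z \<in> borel_measurable M" and "a \<noteq> b"
    and "prob {\<omega> \<in> space M. Z \<omega> = a} + prob {\<omega> \<in> space M. Z \<omega> = b} = 1"
  shows "AE \<omega> in M. Z \<omega> = a \<or> Z \<omega> = b"
proof -
  have "prob {\<omega> \<in> space M. Z \<omega> = a \<or> Z \<omega> = b}
      = prob ({\<omega> \<in> space M. Z \<omega> = a} \<union> {\<omega> \<in> space M. Z \<omega> = b})"
    by (rule arg_cong[where f=prob]) blast
  also have "\<dots> = prob {\<omega> \<in> space M. Z \<omega> = a} + prob {\<omega> \<in> space M. Z \<omega> = b}"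
    by (rule finite_measure_Union) (measurable, measurable, use assms(2) in force)
  also have "\<dots> = 1"
    by (fact assms(3))
  finally show ?thesis
    by (rule AE_prob_1[THEN eventually_mono]) simp
qed

lemma (in prob_space) borel_measurable_prob_less:
  fixes Z :: "'a \<Rightarrow> real"
  assumes [measurable]: "Z \<in> borel_measurable M"
  shows "(\<lambda>s. prob {\<omega> \<in> space M. s < Z \<omega>}) \<in> borel_measurable borel"
proof -
  have "mono (\<lambda>u. prob {\<omega> \<in> space M. - u < Z \<omega>})"
    by (intro monoI finite_measure_mono) (force, measurable)
  then have "(\<lambda>u. prob {\<omega> \<in> space M. - u < Z \<omega>}) \<in> borel_measurable borel"
    by (rule borel_measurable_mono)
  from measurable_compose[OF borel_measurable_uminus[OF measurable_ident_sets[OF refl]] this]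
  show ?thesis by simp
qed

(* By Tonelli, the integral of P(Z > s) e^(k s) over s > 0 is E of the integral of e^(k s) over
   0 < s < Z, which is at most E e^(k Z) / k. *)
lemma (in prob_space) set_integrable_tail_exp:
  assumes [measurable]: "Z \<in> borel_measurable M" and k: "0 < k"
    and integrable_exp: "integrable M (\<lambda>\<omega>. exp (k * Z \<omega>))"
  shows "set_integrable lborel {0<..} (\<lambda>s. prob {\<omega> \<in> space M. s < Z \<omega>} * exp (k * s))"
  unfolding set_integrable_def
proof (rule integrableI_nonneg)
  interpret pair_sigma_finite M lborel
    by (intro pair_sigma_finite.intro sigma_finite_measure_axioms lborel.sigma_finite_measure_axioms)
  have "(\<integral>\<^sup>+s. ennreal (indicator {0<..} s *\<^sub>R (prob {\<omega> \<in> space M. s < Z \<omega>} * exp (k * s))) \<partial>lborel)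
      = (\<integral>\<^sup>+s. (\<integral>\<^sup>+\<omega>. ennreal (exp (k * s)) * indicator {0<..<Z \<omega>} s \<partial>M) \<partial>lborel)"
  proof (rule nn_integral_cong)
    fix s :: real
    have "(\<integral>\<^sup>+\<omega>. ennreal (exp (k * s)) * indicator {0<..<Z \<omega>} s \<partial>M)
        = (\<integral>\<^sup>+\<omega>. ennreal (exp (k * s) * indicator {0<..} s) * indicator {\<omega> \<in> space M. s < Z \<omega>} \<omega> \<partial>M)"
      by (intro nn_integral_cong) (auto split: split_indicator)
    also have "\<dots> = ennreal (exp (k * s) * indicator {0<..} s) * emeasure M {\<omega> \<in> space M. s < Z \<omega>}"
      by (rule nn_integral_cmult_indicator) measurable
    also have "\<dots> = ennreal (indicator {0<..} s *\<^sub>R (prob {\<omega> \<in> space M. s < Z \<omega>} * exp (k * s)))"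
      by (simp add: emeasure_eq_measure ennreal_mult'' mult_ac)
    finally show "ennreal (indicator {0<..} s *\<^sub>R (prob {\<omega> \<in> space M. s < Z \<omega>} * exp (k * s)))
        = (\<integral>\<^sup>+\<omega>. ennreal (exp (k * s)) * indicator {0<..<Z \<omega>} s \<partial>M)"
      by (rule sym)
  qed
  also have "\<dots> = (\<integral>\<^sup>+\<omega>. (\<integral>\<^sup>+s. ennreal (exp (k * s)) * indicator {0<..<Z \<omega>} s \<partial>lborel) \<partial>M)"
  proof (rule Fubini')
    have "(\<lambda>(\<omega>, s). 0 < s \<and> s < Z \<omega>) \<in> measurable (M \<Otimes>\<^sub>M lborel) (count_space UNIV)"
      by measurable
    then show "(\<lambda>(\<omega>, s). ennreal (exp (k * s)) * indicator {0<..<Z \<omega>} s) \<in> borel_measurable (M \<Otimes>\<^sub>M lborel)"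
      unfolding indicator_def[abs_def] by (simp add: split_beta') measurable
  qed
  also have "\<dots> \<le> (\<integral>\<^sup>+\<omega>. exp (k * Z \<omega>) / k \<partial>M)"
    by (intro nn_integral_mono nn_integral_exp_Ioo_le k)
  also have "\<dots> < \<infinity>"
    using integrable_exp k by (subst nn_integral_eq_integral) auto
  finally show "(\<integral>\<^sup>+s. ennreal (indicator {0<..} s *\<^sub>R (prob {\<omega> \<in> space M. s < Z \<omega>} * exp (k * s))) \<partial>lborel) < \<infinity>" .
next
  show "(\<lambda>s. indicator {0<..} s *\<^sub>R (prob {\<omega> \<in> space M. s < Z \<omega>} * exp (k * s))) \<in> borel_measurable lborel"
    using borel_measurable_prob_less[OF assms(1)] by measurable
next
  show "AE s in lborel. 0 \<le> indicator {0<..} s *\<^sub>R (prob {\<omega> \<in> space M. s < Z \<omega>} * exp (k * s))"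
    by (intro AE_I2 scaleR_nonneg_nonneg mult_nonneg_nonneg measure_nonneg) auto
qed

locale signed_lindley_stationary = prob_space M for M :: "'a measure" +
  fixes X Y W B :: "'a \<Rightarrow> real" and p \<kappa> :: real
  assumes X_measurable[measurable]: "X \<in> borel_measurable M"
    and Y_measurable[measurable]: "Y \<in> borel_measurable M"
    and W_measurable[measurable]: "W \<in> borel_measurable M"
    and B_measurable[measurable]: "B \<in> borel_measurable M"
    and indep: "indep_vars (\<lambda>_. borel)
          (\<lambda>i::nat. if i = 0 then X else if i = 1 then Y else if i = 2 then W else B)
          {0, 1, 2, 3}"
    and p_pos: "0 < p" and p_less_1: "p < 1"
    and Y_1: "prob {\<omega> \<in> space M. Y \<omega> = 1} = p"
    and Y_minus_1: "prob {\<omega> \<in> space M. Y \<omega> = -1} = 1 - p"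
    and B_1: "prob {\<omega> \<in> space M. B \<omega> = 1} = p"
    and B_0: "prob {\<omega> \<in> space M. B \<omega> = 0} = 1 - p"
    and stationary: "distr M borel W = distr M borel (\<lambda>\<omega>. max 0 (Y \<omega> * W \<omega> + X \<omega>))"
    and kappa_pos: "0 < \<kappa>"
    and integrable_exp_X: "integrable M (\<lambda>\<omega>. exp (\<kappa> * X \<omega>))"
begin

lemma indep_XW:
  assumes [measurable]: "g \<in> borel_measurable (borel \<Otimes>\<^sub>M borel)"
  shows indep_Y_XW: "indep_var borel Y borel (\<lambda>\<omega>. g (X \<omega>, W \<omega>))"
    and indep_B_XW: "indep_var borel B borel (\<lambda>\<omega>. g (X \<omega>, W \<omega>))"
proof -
  let ?Z = "\<lambda>i::nat. if i = 0 then X else if i = 1 then Y else if i = 2 then W else B"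
  have g_XW: "(\<lambda>h. g (h 0, h 2)) \<in> borel_measurable (PiM {0, 2} (\<lambda>_. borel))"
    by (intro measurable_compose[OF _ assms] measurable_Pair measurable_component_singleton) auto
  have "indep_var borel (?Z i) borel (\<lambda>\<omega>. (\<lambda>h. g (h 0, h 2)) (restrict (\<lambda>i. ?Z i \<omega>) {0, 2}))"
    if "i \<in> {1, 3}" for i
    by (rule indep_var_restrict_compose[OF indep _ _ _ g_XW]) (use that in auto)
  from this[of 1] this[of 3]
  show "indep_var borel Y borel (\<lambda>\<omega>. g (X \<omega>, W \<omega>))" "indep_var borel B borel (\<lambda>\<omega>. g (X \<omega>, W \<omega>))"
    by simp_all
qed

lemma prob_W_stationary:
  assumes "A \<in> sets borel"
  shows "prob {\<omega> \<in> space M. W \<omega> \<in> A} = prob {\<omega> \<in> space M. max 0 (Y \<omega> * W \<omega> + X \<omega>) \<in> A}"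
proof -
  have "measure (distr M borel W) A = measure (distr M borel (\<lambda>\<omega>. max 0 (Y \<omega> * W \<omega> + X \<omega>))) A"
    by (simp add: stationary)
  with assms show ?thesis
    by (subst (asm) (1 2) measure_distr) (auto simp: vimage_def Int_def conj_commute)
qed

lemma AE_W_nonneg: "AE \<omega> in M. 0 \<le> W \<omega>"
proof -
  have "prob {\<omega> \<in> space M. W \<omega> \<in> {0..}} = 1"
    by (subst prob_W_stationary) (auto simp: prob_space)
  from AE_prob_1[OF this] show ?thesis by auto
qed

lemma AE_Y_sign: "AE \<omega> in M. Y \<omega> = 1 \<or> Y \<omega> = -1"
  by (rule AE_two_valued) (use Y_1 Y_minus_1 in auto)

lemma AE_B_01: "AE \<omega> in M. B \<omega> = 1 \<or> B \<omega> = 0"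
  by (rule AE_two_valued) (use B_1 B_0 in auto)

definition W_tail :: "real \<Rightarrow> real" where
  "W_tail s = prob {\<omega> \<in> space M. s < W \<omega>}"

definition sum_tail :: "real \<Rightarrow> real" where
  "sum_tail s = prob {\<omega> \<in> space M. s < X \<omega> + W \<omega>}"

definition diff_tail :: "real \<Rightarrow> real" where
  "diff_tail s = prob {\<omega> \<in> space M. s < X \<omega> - W \<omega>}"

lemma borel_measurable_tails[measurable]:
  "W_tail \<in> borel_measurable borel" "sum_tail \<in> borel_measurable borel"
  "diff_tail \<in> borel_measurable borel"
  unfolding W_tail_def[abs_def] sum_tail_def[abs_def] diff_tail_def[abs_def]
  by (intro borel_measurable_prob_less; measurable)+

lemma W_tail_nonneg_arg:
  assumes "0 \<le> s"
  shows "W_tail s = p * sum_tail s + (1 - p) * diff_tail s"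
proof -
  have "W_tail s = prob {\<omega> \<in> space M. max 0 (Y \<omega> * W \<omega> + X \<omega>) \<in> {s<..}}"
    unfolding W_tail_def by (subst prob_W_stationary[symmetric]) auto
  also have "\<dots> = prob ({\<omega> \<in> space M. Y \<omega> \<in> {1} \<and> X \<omega> + W \<omega> \<in> {s<..}}
                    \<union> {\<omega> \<in> space M. Y \<omega> \<in> {-1} \<and> X \<omega> - W \<omega> \<in> {s<..}})"
    by (rule finite_measure_eq_AE) (use AE_Y_sign assms in \<open>auto elim!: eventually_mono\<close>)
  also have "\<dots> = prob {\<omega> \<in> space M. Y \<omega> \<in> {1} \<and> X \<omega> + W \<omega> \<in> {s<..}}
                + prob {\<omega> \<in> space M. Y \<omega> \<in> {-1} \<and> X \<omega> - W \<omega> \<in> {s<..}}"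
    by (rule finite_measure_Union) auto
  also have "\<dots> = p * sum_tail s + (1 - p) * diff_tail s"
    using prob_indep_var_conj[OF indep_Y_XW[of "\<lambda>(x, w). x + w"], of "{1}" "{s<..}"]
      prob_indep_var_conj[OF indep_Y_XW[of "\<lambda>(x, w). x - w"], of "{-1}" "{s<..}"]
    by (simp add: Y_1 Y_minus_1 sum_tail_def diff_tail_def)
  finally show ?thesis .
qed

lemma W_tail_neg_arg: "s < 0 \<Longrightarrow> W_tail s = 1"
  unfolding W_tail_def
  by (subst prob_space[symmetric], rule finite_measure_eq_AE)
    (use AE_W_nonneg in \<open>auto elim!: eventually_mono\<close>)

lemma prob_exp_W_greater: "0 < t \<Longrightarrow> prob {\<omega> \<in> space M. t < exp (W \<omega>)} = W_tail (ln t)"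
  unfolding W_tail_def by (simp add: less_exp_iff_ln_less)

lemma prob_B_exp_X_exp_W_greater:
  assumes "0 < t"
  shows "prob {\<omega> \<in> space M. t < B \<omega> * exp (X \<omega>) * exp (W \<omega>)} = p * sum_tail (ln t)"
proof -
  have "prob {\<omega> \<in> space M. t < B \<omega> * exp (X \<omega>) * exp (W \<omega>)}
      = prob {\<omega> \<in> space M. B \<omega> \<in> {1} \<and> X \<omega> + W \<omega> \<in> {ln t<..}}"
    by (rule finite_measure_eq_AE)
      (use AE_B_01 assms in \<open>auto elim!: eventually_mono simp: exp_add[symmetric] less_exp_iff_ln_less\<close>)
  also have "\<dots> = p * sum_tail (ln t)"
    using prob_indep_var_conj[OF indep_B_XW[of "\<lambda>(x, w). x + w"], of "{1}" "{ln t<..}"]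
    by (simp add: B_1 sum_tail_def)
  finally show ?thesis .
qed

lemma prob_sum_le: "prob {\<omega> \<in> space M. X \<omega> + W \<omega> \<le> s} = 1 - sum_tail s"
proof -
  have "prob {\<omega> \<in> space M. X \<omega> + W \<omega> \<le> s} = prob (space M - {\<omega> \<in> space M. s < X \<omega> + W \<omega>})"
    by (rule arg_cong[where f=prob]) auto
  then show ?thesis
    unfolding sum_tail_def by (simp add: prob_compl)
qed

lemma diff_tail_le: "diff_tail s \<le> prob {\<omega> \<in> space M. s < X \<omega>}"
  unfolding diff_tail_def
  by (rule finite_measure_mono_AE) (use AE_W_nonneg in \<open>auto elim!: eventually_mono\<close>)

(* tail_gap (ln t) = P(R > t) - P(M R > t) for t > 0, the integrand defining C. *)
definition tail_gap :: "real \<Rightarrow> real" where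
  "tail_gap s = W_tail s - p * sum_tail s"

lemma borel_measurable_tail_gap[measurable]: "tail_gap \<in> borel_measurable borel"
  unfolding tail_gap_def[abs_def] by measurable

lemma tail_gap_nonneg_arg: "0 \<le> s \<Longrightarrow> tail_gap s = (1 - p) * diff_tail s"
  by (simp add: tail_gap_def W_tail_nonneg_arg)

lemma tail_gap_neg_arg: "s < 0 \<Longrightarrow> tail_gap s = (1 - p) + p * (1 - sum_tail s)"
  by (simp add: tail_gap_def W_tail_neg_arg algebra_simps)

lemma tail_gap_nonneg: "0 \<le> tail_gap s"
  using p_pos p_less_1 sum_tail_def[of s] diff_tail_def[of s]
  by (cases "0 \<le> s") (simp_all add: tail_gap_nonneg_arg tail_gap_neg_arg)

lemma set_integrable_diff_tail: "set_integrable lborel {0<..} (\<lambda>s. diff_tail s * exp (\<kappa> * s))"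
proof (rule set_integrable_bound)
  show "set_integrable lborel {0<..} (\<lambda>s. prob {\<omega> \<in> space M. s < X \<omega>} * exp (\<kappa> * s))"
    by (rule set_integrable_tail_exp[OF X_measurable kappa_pos integrable_exp_X])
  show "AE s in lborel. s \<in> {0<..} \<longrightarrow> norm (diff_tail s * exp (\<kappa> * s))
      \<le> norm (prob {\<omega> \<in> space M. s < X \<omega>} * exp (\<kappa> * s))"
    using diff_tail_le by (auto simp: diff_tail_def intro!: mult_right_mono)
qed (simp add: set_borel_measurable_def)

lemma set_integrable_sum_cdf: "set_integrable lborel {..0} (\<lambda>s. exp (\<kappa> * s) * (1 - sum_tail s))"
proof (rule set_integrable_bound)
  show "set_integrable lborel {..0} (\<lambda>s. exp (\<kappa> * s))"
    by (rule LBINT_exp_atMost(1)[OF kappa_pos])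
  show "AE s in lborel. s \<in> {..0} \<longrightarrow> norm (exp (\<kappa> * s) * (1 - sum_tail s)) \<le> norm (exp (\<kappa> * s))"
    by (auto simp: sum_tail_def abs_mult)
qed (simp add: set_borel_measurable_def)

lemma LBINT_tail_gap_exp:
  "(LBINT s. tail_gap s * exp (\<kappa> * s))
     = (1 - p) / \<kappa> + (1 - p) * (LBINT s:{0<..}. diff_tail s * exp (\<kappa> * s))
       + p * (LBINT s:{..0}. exp (\<kappa> * s) * (1 - sum_tail s))"
proof -
  have neg_AE: "AE s \<in> {..0} in lborel. tail_gap s * exp (\<kappa> * s)
      = (1 - p) * exp (\<kappa> * s) + p * (exp (\<kappa> * s) * (1 - sum_tail s))"
    using AE_lborel_singleton[of 0]
    by eventually_elim (auto simp: tail_gap_neg_arg algebra_simps)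
  have int_neg: "set_integrable lborel {..0} (\<lambda>s. (1 - p) * exp (\<kappa> * s) + p * (exp (\<kappa> * s) * (1 - sum_tail s)))"
    using LBINT_exp_atMost(1)[OF kappa_pos] set_integrable_sum_cdf by auto
  have pos: "(LBINT s:{0<..}. tail_gap s * exp (\<kappa> * s)) = (1 - p) * (LBINT s:{0<..}. diff_tail s * exp (\<kappa> * s))"
    by (subst set_integral_mult_right[symmetric], rule set_lebesgue_integral_cong)
      (auto simp: tail_gap_nonneg_arg)
  have "{..0::real} \<union> {0<..} = UNIV" by auto
  then have "(LBINT s. tail_gap s * exp (\<kappa> * s)) = (LBINT s:{..0} \<union> {0<..}. tail_gap s * exp (\<kappa> * s))"
    by (simp add: set_lebesgue_integral_def)
  also have "\<dots> = (LBINT s:{..0}. tail_gap s * exp (\<kappa> * s)) + (LBINT s:{0<..}. tail_gap s * exp (\<kappa> * s))"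
  proof (rule set_integral_Un)
    show "set_integrable lborel {..0} (\<lambda>s. tail_gap s * exp (\<kappa> * s))"
      using int_neg by (subst set_integrable_cong_AE[OF _ _ neg_AE]) auto
    show "set_integrable lborel {0<..} (\<lambda>s. tail_gap s * exp (\<kappa> * s))"
      using set_integrable_diff_tail
      by (subst set_integrable_cong[OF refl refl, where f'="\<lambda>s. (1 - p) * (diff_tail s * exp (\<kappa> * s))"])
        (auto simp: tail_gap_nonneg_arg)
  qed auto
  also have "(LBINT s:{..0}. tail_gap s * exp (\<kappa> * s))
      = (1 - p) / \<kappa> + p * (LBINT s:{..0}. exp (\<kappa> * s) * (1 - sum_tail s))"
    using LBINT_exp_atMost[OF kappa_pos, of 0] set_integrable_sum_cdf
    by (subst set_lebesgue_integral_cong_AE[OF _ _ _ neg_AE]) auto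
  finally show ?thesis by (simp add: pos)
qed

end

(* Only kappa > 0 and E e^(kappa X) < oo are used: P(X < 0) > 0, non-latticity, E e^(kappa X) = 1/p
   and the integrability of X e^(kappa X) make C the tail constant of R, but the identity holds
   without them (and for m = 0 as well, both sides being 0 since x / 0 = 0). *)
theorem proposition4p2:
  fixes M :: "'a measure" and X Y W B :: "'a \<Rightarrow> real" and p \<kappa> :: real
  assumes "prob_space M"
    and "X \<in> borel_measurable M" and "Y \<in> borel_measurable M"
    and "W \<in> borel_measurable M" and "B \<in> borel_measurable M"
    and indep: "prob_space.indep_vars M (\<lambda>_. borel)
          (\<lambda>i::nat. if i = 0 then X else if i = 1 then Y else if i = 2 then W else B)
          {0, 1, 2, 3}"
    and p: "0 < p" "p < 1"
    and Xneg: "measure M {\<omega> \<in> space M. X \<omega> < 0} > 0"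
    and nonlat: "prob_space.nonlattice_rv M X"
    and Y1: "measure M {\<omega> \<in> space M. Y \<omega> = 1} = p"
    and Ym1: "measure M {\<omega> \<in> space M. Y \<omega> = -1} = 1 - p"
    and B1: "measure M {\<omega> \<in> space M. B \<omega> = 1} = p"
    and B0: "measure M {\<omega> \<in> space M. B \<omega> = 0} = 1 - p"
    and stat: "distr M borel W = distr M borel (\<lambda>\<omega>. max 0 (Y \<omega> * W \<omega> + X \<omega>))"
    and kpos: "\<kappa> > 0"
    and int1: "integrable M (\<lambda>\<omega>. exp (\<kappa> * X \<omega>))"
    and mgf: "(\<integral>\<omega>. exp (\<kappa> * X \<omega>) \<partial>M) = 1 / p"
    and int2: "integrable M (\<lambda>\<omega>. X \<omega> * exp (\<kappa> * X \<omega>))"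
  shows "(let m = (\<integral>\<omega>. X \<omega> * exp (\<kappa> * X \<omega>) \<partial>M);
              R = (\<lambda>\<omega>. exp (W \<omega>));
              MM = (\<lambda>\<omega>. B \<omega> * exp (X \<omega>));
              C = 1 / m * (LBINT t:{0<..}.
                    (measure M {\<omega> \<in> space M. R \<omega> > t}
                     - measure M {\<omega> \<in> space M. MM \<omega> * R \<omega> > t}) * t powr (\<kappa> - 1))
          in C = (1 - p) / (m * \<kappa>)
               + (1 - p) / m * (LBINT s:{0<..}.
                    measure M {\<omega> \<in> space M. X \<omega> - W \<omega> > s} * exp (\<kappa> * s))
               + p / m * (LBINT s:{..0}.
                    exp (\<kappa> * s) * measure M {\<omega> \<in> space M. X \<omega> + W \<omega> \<le> s}))"
proof -
  interpret signed_lindley_stationary M X Y W B p \<kappa>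
    by (intro signed_lindley_stationary.intro signed_lindley_stationary_axioms.intro)
      (use assms in auto)
  define m where "m = (\<integral>\<omega>. X \<omega> * exp (\<kappa> * X \<omega>) \<partial>M)"
  have "(LBINT t:{0<..}. (prob {\<omega> \<in> space M. exp (W \<omega>) > t}
          - prob {\<omega> \<in> space M. B \<omega> * exp (X \<omega>) * exp (W \<omega>) > t}) * t powr (\<kappa> - 1))
      = (LBINT t:{0<..}. tail_gap (ln t) * t powr (\<kappa> - 1))" (is "?C = _")
    by (rule set_lebesgue_integral_cong)
      (auto simp: prob_exp_W_greater prob_B_exp_X_exp_W_greater tail_gap_def)
  also have "\<dots> = (LBINT s. tail_gap s * exp (\<kappa> * s))"
    by (rule LBINT_powr_exp_substitution) (auto intro: tail_gap_nonneg)
  also have "\<dots> = (1 - p) / \<kappa>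
      + (1 - p) * (LBINT s:{0<..}. prob {\<omega> \<in> space M. X \<omega> - W \<omega> > s} * exp (\<kappa> * s))
      + p * (LBINT s:{..0}. exp (\<kappa> * s) * prob {\<omega> \<in> space M. X \<omega> + W \<omega> \<le> s})"
    (is "_ = _ + (1 - p) * ?I + p * ?J")
    by (simp add: LBINT_tail_gap_exp diff_tail_def prob_sum_le)
  finally have C_integral: "?C = (1 - p) / \<kappa> + (1 - p) * ?I + p * ?J" .
  show ?thesis
    unfolding Let_def m_def[symmetric] C_integral using kappa_pos
    by (cases "m = 0") (simp_all add: field_simps)
qed

end
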